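(* Let $f\in\mathbb{R}[x]$ be squarefree of degree $n$, $f=f_n(x-\xi_1)\cdots(x-\xi_n)$ with pairwise distinct $\xi_i\in\mathbb{C}$, where $\xi_1,\dots,\xi_k$ are the real roots ($0\le k\le n$) and the non-real roots are labeled so that $\xi_{k+2i-1}=\overline{\xi_{k+2i}}$ for $1\le i\le \frac{n-k}{2}$. Let $u_1,\dots,u_n\in\mathbb{C}[x]$ be the Lagrange basis $u_i=\prod_{j\neq i}\frac{x-\xi_j}{\xi_i-\xi_j}$. Let $g\in\mathbb{R}[x]$ satisfy $g(\xi_i)>0$ for $1\le i\le k$. Fix real numbers $\lambda_i>|g(\xi_{k+2i})|$ for $1\le i\le\frac{n-k}{2}$ and set $$h=\sum_{i=1}^n g(\xi_i)\,u_i^2+2\sum_{i=1}^{(n-k)/2}\lambda_i\,u_{k+2i-1}u_{k+2i}.$$ Then $h\in\mathbb{R}[x]$, $h\equiv g\pmod f$, and $h=\sum_{i=1}^n\omega_i h_i^2$, where: - $h_i=u_i$ and $\omega_i=g(\xi_i)$ for $1\le i\le k$; - for $1\le i\le\frac{n-k}{2}$, writing $\gamma_i=g(\xi_{k+2i})$, $$h_{k+2i-1}=\Re(u_{k+2i})-\frac{\Im(\gamma_i)}{\lambda_i+\Re(\gamma_i)}\Im(u_{k+2i}),\qquad h_{k+2i}=\frac{\sqrt{\lambda_i^2-|\gamma_i|^2}}{\lambda_i+\Re(\gamma_i)}\Im(u_{k+2i}),$$ and $\omega_{k+2i-1}=\omega_{k+2i}=2(\lambda_i+\Re(\gamma_i))$.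 Moreover all $\omega_i>0$, and $h_1,\dots,h_n$ are linearly independent polynomials in $\mathbb{R}[x]$ of degree $<n$.
   Context: For a polynomial $u\in\mathbb{C}[x]$, $\Re(u)$ and $\Im(u)$ denote the real polynomials obtained by taking real and imaginary parts of the coefficients, so $u=\Re(u)+\mathbf{i}\,\Im(u)$. *)

theory Defs
  imports "HOL-Computational_Algebra.Computational_Algebra"
begin

definition Re_poly :: "complex poly \<Rightarrow> real poly" where
  "Re_poly u = map_poly Re u"

definition Im_poly :: "complex poly \<Rightarrow> real poly" where
  "Im_poly u = map_poly Im u"

definition lagrange_basis :: "nat \<Rightarrow> (nat \<Rightarrow> complex) \<Rightarrow> nat \<Rightarrow> complex poly" where
  "lagrange_basis n xi i =
     (\<Prod>j\<in>{1..n} - {i}. smult (1 / (xi i - xi j)) [:- xi j, 1:])"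

end

theory Submission
  imports Defs
begin

text \<open>
  The Lagrange basis is permuted by complex conjugation: \<open>u\<^sub>i\<close> is real for a real node
  and \<open>u\<^bsub>k+2j-1\<^esub> = cnj u\<^bsub>k+2j\<^esub>\<close> for a conjugate pair. So the real nodes contribute
  real squares, and a pair, writing \<open>u\<^bsub>k+2j\<^esub> = A + \<i> B\<close> with \<open>A, B\<close> real, contributes the real
  quadratic form \<open>2(\<lambda> + Re \<gamma>) A\<^sup>2 - 4 Im \<gamma> A B + 2(\<lambda> - Re \<gamma>) B\<^sup>2\<close>, which is positive definite
  because \<open>\<lambda> > |\<gamma>|\<close>; completing the square gives the two weighted squares. Since
  \<open>u\<^sub>i(\<xi>\<^sub>j) = \<delta>\<^sub>i\<^sub>j\<close>, every cross term vanishes at the nodes, so \<open>h(\<xi>\<^sub>j) = g(\<xi>\<^sub>j)\<close> and \<open>f\<close> divides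
  \<open>h - g\<close>. Finally the \<open>h\<^sub>i\<close> arise from the \<open>u\<^sub>i\<close> by an invertible change of basis, pairwise
  \<open>(A, B) \<mapsto> (A - t B, s B)\<close> with \<open>s > 0\<close>, so they are linearly independent.
\<close>

section \<open>Real and complex polynomials\<close>

lemma map_poly_of_real_add:
  "map_poly (of_real :: real \<Rightarrow> 'a::real_algebra_1) (p + q) = map_poly of_real p + map_poly of_real q"
  by (rule poly_eqI) (simp add: coeff_map_poly)

lemma map_poly_of_real_diff:
  "map_poly (of_real :: real \<Rightarrow> 'a::real_algebra_1) (p - q) = map_poly of_real p - map_poly of_real q"
  by (rule poly_eqI) (simp add: coeff_map_poly)

lemma map_poly_of_real_mult:
  "map_poly (of_real :: real \<Rightarrow> 'a::{real_algebra_1,comm_ring_1}) (p * q)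
     = map_poly of_real p * map_poly of_real q"
  by (rule poly_eqI) (simp add: coeff_map_poly coeff_mult)

lemma map_poly_of_real_smult:
  "map_poly (of_real :: real \<Rightarrow> 'a::{real_algebra_1,comm_ring_1}) (smult c p)
     = smult (of_real c) (map_poly of_real p)"
  by (rule map_poly_smult) auto

lemma map_poly_of_real_power:
  "map_poly (of_real :: real \<Rightarrow> 'a::{real_algebra_1,comm_ring_1}) (p ^ n) = map_poly of_real p ^ n"
  by (induction n) (simp_all add: map_poly_of_real_mult)

lemma map_poly_of_real_sum:
  "map_poly (of_real :: real \<Rightarrow> 'a::{real_algebra_1,comm_ring_1}) (sum f A)
     = (\<Sum>i\<in>A. map_poly of_real (f i))"
  by (induction A rule: infinite_finite_induct) (simp_all add: map_poly_of_real_add)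

lemmas map_poly_of_real_simps =
  map_poly_of_real_add map_poly_of_real_diff map_poly_of_real_mult
  map_poly_of_real_smult map_poly_of_real_power map_poly_of_real_sum

lemma Re_poly_of_real_poly [simp]: "Re_poly (map_poly complex_of_real p) = p"
  by (simp add: Re_poly_def map_poly_map_poly o_def)

lemma of_real_poly_eq_0_iff [simp]: "map_poly complex_of_real p = 0 \<longleftrightarrow> p = 0"
  by (metis Re_poly_of_real_poly map_poly_0)

lemma degree_of_real_poly [simp]: "degree (map_poly complex_of_real p) = degree p"
  by (rule degree_map_poly) simp

lemma degree_Re_poly_le: "degree (Re_poly u) \<le> degree u"
  by (simp add: Re_poly_def map_poly_degree_leq)

lemma degree_Im_poly_le: "degree (Im_poly u) \<le> degree u"
  by (simp add: Im_poly_def map_poly_degree_leq)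

lemma complex_poly_Re_Im:
  "u = map_poly complex_of_real (Re_poly u) + smult \<i> (map_poly complex_of_real (Im_poly u))"
  by (rule poly_eqI) (simp add: coeff_map_poly Re_poly_def Im_poly_def complex_eq_iff)

lemma map_poly_cnj_Re_Im:
  "map_poly cnj u = map_poly complex_of_real (Re_poly u) - smult \<i> (map_poly complex_of_real (Im_poly u))"
  by (rule poly_eqI) (simp add: coeff_map_poly Re_poly_def Im_poly_def complex_eq_iff)

lemma real_poly_if_map_poly_cnj_eq:
  assumes "map_poly cnj u = u"
  shows "u = map_poly complex_of_real (Re_poly u)"
proof (rule poly_eqI)
  fix j
  have "cnj (coeff u j) = coeff u j"
    using arg_cong[OF assms, of "\<lambda>p. coeff p j"] by (simp add: coeff_map_poly)
  then show "coeff u j = coeff (map_poly complex_of_real (Re_poly u)) j"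
    by (simp add: coeff_map_poly Re_poly_def complex_eq_iff)
qed

lemma poly_of_real_poly_cnj:
  "poly (map_poly complex_of_real p) (cnj z) = cnj (poly (map_poly complex_of_real p) z)"
  by (simp add: poly_cnj map_poly_map_poly o_def)

lemma poly_of_real_poly_of_real:
  "poly (map_poly complex_of_real p) (complex_of_real x) = complex_of_real (poly p x)"
  by (induction p) (simp_all add: map_poly_pCons)

lemma of_real_poly_dvd_imp_dvd:
  fixes f q :: "real poly"
  assumes dvd: "map_poly complex_of_real f dvd map_poly complex_of_real q"
  shows "f dvd q"
proof (cases "f = 0")
  case True
  then show ?thesis using dvd by simp
next
  case False
  have "map_poly complex_of_real q
      = map_poly complex_of_real f * map_poly complex_of_real (q div f) + map_poly complex_of_real (q mod f)"
    by (simp flip: map_poly_of_real_mult map_poly_of_real_add)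
  then have "map_poly complex_of_real f dvd map_poly complex_of_real (q mod f)"
    using dvd by (metis dvd_add_right_iff dvd_triv_left)
  moreover have "degree (q mod f) < degree f" if "q mod f \<noteq> 0"
    using that False degree_mod_less by blast
  ultimately have "q mod f = 0"
    using dvd_imp_degree_le[of "map_poly complex_of_real f" "map_poly complex_of_real (q mod f)"]
    by (metis degree_of_real_poly leD of_real_poly_eq_0_iff)
  then show ?thesis by (simp add: mod_eq_0_iff_dvd)
qed

section \<open>Lagrange interpolation\<close>

lemma prod_linear_factors_dvd:
  fixes xi :: "nat \<Rightarrow> 'a::idom"
  assumes "finite A" "inj_on xi A" "\<And>j. j \<in> A \<Longrightarrow> poly p (xi j) = 0"
  shows "(\<Prod>j\<in>A. [:- xi j, 1:]) dvd p"
  using assms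
proof (induction A arbitrary: p rule: finite_induct)
  case empty
  then show ?case by simp
next
  case (insert a A)
  have "[:- xi a, 1:] dvd p"
    using insert.prems(2) by (simp add: dvd_iff_poly_eq_0)
  then obtain q where q: "p = [:- xi a, 1:] * q" ..
  have "poly q (xi j) = 0" if "j \<in> A" for j
  proof -
    have "xi j \<noteq> xi a"
      using that insert.hyps(2) insert.prems(1) by (metis inj_on_contraD insertCI)
    then show ?thesis using insert.prems(2)[of j] that q by simp
  qed
  then have "(\<Prod>j\<in>A. [:- xi j, 1:]) dvd q"
    using insert.IH insert.prems(1) by (auto intro: inj_on_subset)
  then show ?case
    unfolding prod.insert[OF insert.hyps] q by (rule mult_dvd_mono[OF dvd_refl])
qed

lemma poly_eq_if_agree_on_nodes:
  fixes xi :: "nat \<Rightarrow> 'a::idom"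
  assumes "inj_on xi {1..n}" "degree p < n" "degree q < n"
    and "\<And>j. j \<in> {1..n} \<Longrightarrow> poly p (xi j) = poly q (xi j)"
  shows "p = q"
proof (rule ccontr)
  assume "p \<noteq> q"
  have "(\<Prod>j\<in>{1..n}. [:- xi j, 1:]) dvd p - q"
    using assms(1,4) by (intro prod_linear_factors_dvd) simp_all
  then have "degree (\<Prod>j\<in>{1..n}. [:- xi j, 1:]) \<le> degree (p - q)"
    using \<open>p \<noteq> q\<close> by (intro dvd_imp_degree_le) simp_all
  moreover have "degree (\<Prod>j\<in>{1..n}. [:- xi j, 1:]) = n"
    by (subst degree_prod_eq_sum_degree) auto
  ultimately show False
    using assms(2,3) degree_diff_le_max[of p q] by linarith
qed

lemma poly_lagrange_basis:
  assumes "inj_on xi {1..n}" "i \<in> {1..n}" "j \<in> {1..n}"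
  shows "poly (lagrange_basis n xi i) (xi j) = (if i = j then 1 else 0)"
proof (cases "i = j")
  case True
  have "poly (smult (1 / (xi i - xi l)) [:- xi l, 1:]) (xi i) = 1" if "l \<in> {1..n} - {i}" for l
  proof -
    have "xi i - xi l \<noteq> 0"
      using that assms by (metis DiffE eq_iff_diff_eq_0 inj_on_contraD singletonI)
    then show ?thesis by (simp flip: diff_divide_distrib)
  qed
  then show ?thesis
    using True by (simp add: lagrange_basis_def poly_prod)
next
  case False
  then show ?thesis
    using assms by (auto simp: lagrange_basis_def poly_prod intro!: prod_zero)
qed

lemma degree_lagrange_basis_less:
  assumes "i \<in> {1..n}"
  shows "degree (lagrange_basis n xi i) < n"
proof -
  have "degree (lagrange_basis n xi i)
      \<le> (\<Sum>j\<in>{1..n} - {i}. degree (smult (1 / (xi i - xi j)) [:- xi j, 1:]))"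
    unfolding lagrange_basis_def by (rule degree_prod_sum_le[simplified o_def]) simp
  also have "\<dots> \<le> (\<Sum>j\<in>{1..n} - {i}. 1)"
    by (intro sum_mono order.trans[OF degree_smult_le]) simp
  also have "\<dots> < n"
    using assms by simp
  finally show ?thesis .
qed

lemma poly_lagrange_combination:
  assumes "inj_on xi {1..n}" "p \<in> {1..n}"
  shows "poly (\<Sum>i=1..n. smult (d i) (lagrange_basis n xi i)) (xi p) = d p"
  using assms by (simp add: poly_sum poly_lagrange_basis if_distrib cong: if_cong)

lemma map_poly_cnj_lagrange_basis:
  assumes inj: "inj_on xi {1..n}"
    and closed: "\<And>p. p \<in> {1..n} \<Longrightarrow> cnj (xi p) \<in> xi ` {1..n}"
    and i: "i \<in> {1..n}" and i': "i' \<in> {1..n}" and cnj_i: "cnj (xi i) = xi i'"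
  shows "map_poly cnj (lagrange_basis n xi i) = lagrange_basis n xi i'"
proof (rule poly_eq_if_agree_on_nodes[OF inj])
  show "degree (map_poly cnj (lagrange_basis n xi i)) < n"
    using degree_lagrange_basis_less[OF i] by (simp add: degree_map_poly)
  show "degree (lagrange_basis n xi i') < n"
    using degree_lagrange_basis_less[OF i'] .
next
  fix p assume p: "p \<in> {1..n}"
  then obtain q where q: "q \<in> {1..n}" "cnj (xi p) = xi q"
    using closed by blast
  have "i = q \<longleftrightarrow> i' = p"
    using inj_on_eq_iff[OF inj i q(1)] inj_on_eq_iff[OF inj i' p] cnj_i q(2)
    by (metis complex_cnj_cnj)
  then show "poly (map_poly cnj (lagrange_basis n xi i)) (xi p) = poly (lagrange_basis n xi i') (xi p)"
    using q by (simp add: poly_lagrange_basis[OF inj i] poly_lagrange_basis[OF inj i' p])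
qed

section \<open>A conjugate pair of nodes\<close>

text \<open>In the notation of the theorem, \<open>pair_weight \<lambda>\<^sub>i \<gamma>\<^sub>i\<close> is \<open>\<omega>\<^bsub>k+2i\<^esub>\<close>, while \<open>pair_shear\<close>
  and \<open>pair_scale\<close> are the coefficients of \<open>Im(u\<^bsub>k+2i\<^esub>)\<close> in \<open>h\<^bsub>k+2i-1\<^esub>\<close> and \<open>h\<^bsub>k+2i\<^esub>\<close>.\<close>

definition pair_weight :: "real \<Rightarrow> complex \<Rightarrow> real" where
  "pair_weight l \<gamma> = 2 * (l + Re \<gamma>)"

definition pair_shear :: "real \<Rightarrow> complex \<Rightarrow> real" where
  "pair_shear l \<gamma> = Im \<gamma> / (l + Re \<gamma>)"

definition pair_scale :: "real \<Rightarrow> complex \<Rightarrow> real" where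
  "pair_scale l \<gamma> = sqrt (l\<^sup>2 - (cmod \<gamma>)\<^sup>2) / (l + Re \<gamma>)"

lemma pair_weight_pos: "cmod \<gamma> < l \<Longrightarrow> pair_weight l \<gamma> > 0"
  using abs_Re_le_cmod[of \<gamma>] by (simp add: pair_weight_def)

lemma pair_scale_pos: "cmod \<gamma> < l \<Longrightarrow> pair_scale l \<gamma> > 0"
  using abs_Re_le_cmod[of \<gamma>] norm_ge_zero[of \<gamma>]
  by (simp add: pair_scale_def power_strict_mono)

lemma pair_weight_shear: "cmod \<gamma> < l \<Longrightarrow> pair_weight l \<gamma> * pair_shear l \<gamma> = 2 * Im \<gamma>"
  using pair_weight_pos[of \<gamma> l] by (simp add: pair_weight_def pair_shear_def field_simps)

lemma pair_weight_shear_scale: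
  assumes "cmod \<gamma> < l"
  shows "pair_weight l \<gamma> * ((pair_shear l \<gamma>)\<^sup>2 + (pair_scale l \<gamma>)\<^sup>2) = 2 * (l - Re \<gamma>)"
proof -
  have pos: "l + Re \<gamma> > 0"
    using pair_weight_pos[OF assms] by (simp add: pair_weight_def)
  have "(cmod \<gamma>)\<^sup>2 \<le> l\<^sup>2"
    using assms norm_ge_zero[of \<gamma>] by (simp add: power_mono)
  then have "(pair_shear l \<gamma>)\<^sup>2 + (pair_scale l \<gamma>)\<^sup>2 = (l\<^sup>2 - (Re \<gamma>)\<^sup>2) / (l + Re \<gamma>)\<^sup>2"
    by (simp add: pair_shear_def pair_scale_def power_divide cmod_power2 flip: add_divide_distrib)
  also have "\<dots> = (l - Re \<gamma>) / (l + Re \<gamma>)"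
    using pos by (simp add: power2_eq_square square_diff_square_factored)
  finally show ?thesis
    using pos by (simp add: pair_weight_def field_simps)
qed

lemma conj_pair_sum_of_squares:
  fixes u :: "complex poly"
  assumes "cmod \<gamma> < l"
  shows "smult (cnj \<gamma>) ((map_poly cnj u)\<^sup>2) + smult \<gamma> (u\<^sup>2)
           + smult 2 (smult (complex_of_real l) (map_poly cnj u * u))
       = map_poly complex_of_real
           (smult (pair_weight l \<gamma>) ((Re_poly u - smult (pair_shear l \<gamma>) (Im_poly u))\<^sup>2)
            + smult (pair_weight l \<gamma>) ((smult (pair_scale l \<gamma>) (Im_poly u))\<^sup>2))"
proof -
  define \<omega> t s where "\<omega> = complex_of_real (pair_weight l \<gamma>)"
    and "t = complex_of_real (pair_shear l \<gamma>)" and "s = complex_of_real (pair_scale l \<gamma>)"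
  define R I where "R = complex_of_real (Re \<gamma>)" and "I = complex_of_real (Im \<gamma>)"
  define A B where "A = map_poly complex_of_real (Re_poly u)"
    and "B = map_poly complex_of_real (Im_poly u)"
  have u: "u = A + smult \<i> B" and cnj_u: "map_poly cnj u = A - smult \<i> B"
    unfolding A_def B_def by (rule complex_poly_Re_Im, rule map_poly_cnj_Re_Im)
  have \<gamma>: "\<gamma> = R + \<i> * I" and cnj_\<gamma>: "cnj \<gamma> = R - \<i> * I"
    by (simp_all add: R_def I_def complex_eq_iff)
  \<comment> \<open>Comparing the coefficients of \<open>A\<^sup>2\<close>, \<open>A B\<close> and \<open>B\<^sup>2\<close> reduces the identity to these three equations.\<close>
  have \<omega>: "\<omega> = 2 * (complex_of_real l + R)"
    by (simp add: \<omega>_def R_def pair_weight_def)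
  have \<omega>t: "\<omega> * t = 2 * I"
    using arg_cong[OF pair_weight_shear[OF assms], of complex_of_real]
    by (simp add: \<omega>_def t_def I_def)
  have \<omega>ts: "\<omega> * (t\<^sup>2 + s\<^sup>2) = 2 * (complex_of_real l - R)"
    using arg_cong[OF pair_weight_shear_scale[OF assms], of complex_of_real]
    by (simp add: \<omega>_def t_def s_def R_def)
  have "poly (smult (cnj \<gamma>) ((A - smult \<i> B)\<^sup>2) + smult \<gamma> ((A + smult \<i> B)\<^sup>2)
          + smult 2 (smult (complex_of_real l) ((A - smult \<i> B) * (A + smult \<i> B)))) x
      = poly (smult \<omega> ((A - smult t B)\<^sup>2) + smult \<omega> ((smult s B)\<^sup>2)) x" for x
  proof -
    have "\<i> * \<i> = (-1 :: complex)" by simp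
    then show ?thesis
      unfolding cnj_\<gamma> unfolding \<gamma> poly_add poly_smult poly_mult poly_diff power2_eq_square
      using \<omega> \<omega>t \<omega>ts by algebra
  qed
  then have "smult (cnj \<gamma>) ((A - smult \<i> B)\<^sup>2) + smult \<gamma> ((A + smult \<i> B)\<^sup>2)
          + smult 2 (smult (complex_of_real l) ((A - smult \<i> B) * (A + smult \<i> B)))
      = smult \<omega> ((A - smult t B)\<^sup>2) + smult \<omega> ((smult s B)\<^sup>2)"
    by (intro poly_eq_poly_eq_iff[THEN iffD1] ext)
  moreover have "map_poly complex_of_real
           (smult (pair_weight l \<gamma>) ((Re_poly u - smult (pair_shear l \<gamma>) (Im_poly u))\<^sup>2)
            + smult (pair_weight l \<gamma>) ((smult (pair_scale l \<gamma>) (Im_poly u))\<^sup>2))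
      = smult \<omega> ((A - smult t B)\<^sup>2) + smult \<omega> ((smult s B)\<^sup>2)"
    by (simp add: A_def B_def \<omega>_def t_def s_def map_poly_of_real_simps)
  ultimately show ?thesis
    by (simp only: cnj_u flip: u)
qed

lemma conj_pair_linear_combination:
  fixes u :: "complex poly" and c c' t s :: real
  defines "\<alpha> \<equiv> (complex_of_real c + \<i> * complex_of_real (c * t - c' * s)) / 2"
  shows "map_poly complex_of_real (smult c (Re_poly u - smult t (Im_poly u)) + smult c' (smult s (Im_poly u)))
       = smult (cnj \<alpha>) (map_poly cnj u) + smult \<alpha> u"
proof -
  define A B where "A = map_poly complex_of_real (Re_poly u)"
    and "B = map_poly complex_of_real (Im_poly u)"
  have u: "u = A + smult \<i> B" and cnj_u: "map_poly cnj u = A - smult \<i> B"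
    unfolding A_def B_def by (rule complex_poly_Re_Im, rule map_poly_cnj_Re_Im)
  have "poly (smult (complex_of_real c) (A - smult (complex_of_real t) B)
               + smult (complex_of_real c') (smult (complex_of_real s) B)) x
      = poly (smult (cnj \<alpha>) (A - smult \<i> B) + smult \<alpha> (A + smult \<i> B)) x" for x
    by (simp add: \<alpha>_def complex_cnj_divide field_simps)
  then have "smult (complex_of_real c) (A - smult (complex_of_real t) B)
               + smult (complex_of_real c') (smult (complex_of_real s) B)
      = smult (cnj \<alpha>) (A - smult \<i> B) + smult \<alpha> (A + smult \<i> B)"
    by (intro poly_eq_poly_eq_iff[THEN iffD1] ext)
  moreover have "map_poly complex_of_real (smult c (Re_poly u - smult t (Im_poly u)) + smult c' (smult s (Im_poly u)))
      = smult (complex_of_real c) (A - smult (complex_of_real t) B)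
               + smult (complex_of_real c') (smult (complex_of_real s) B)"
    by (simp add: A_def B_def map_poly_of_real_simps)
  ultimately show ?thesis
    by (simp only: cnj_u flip: u)
qed

section \<open>The sum-of-squares representation\<close>

lemma smult_sum_right: "smult c (sum f A) = (\<Sum>i\<in>A. smult c (f i))"
  by (induction A rule: infinite_finite_induct) (simp_all add: smult_add_right)

lemma sum_atLeastAtMost_split_pairs:
  fixes F :: "nat \<Rightarrow> 'a::comm_monoid_add"
  shows "(\<Sum>i=1..k + 2*m. F i) = (\<Sum>i=1..k. F i) + (\<Sum>j=1..m. F (k + 2*j - 1) + F (k + 2*j))"
proof (induction m)
  case 0
  then show ?case by simp
next
  case (Suc m)
  have "(\<Sum>i=1..k + 2 * Suc m. F i) = (\<Sum>i=1..k + 2*m. F i) + (F (k + 2*m + 1) + F (k + 2*m + 2))"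
    by (simp add: add.assoc)
  then show ?case
    using Suc by (simp add: add.assoc)
qed

locale conj_node_labeling =
  fixes n k m :: nat and xi :: "nat \<Rightarrow> complex"
  assumes n_eq: "n = k + 2 * m"
    and inj_xi: "inj_on xi {1..n}"
    and real_nodes: "\<And>i. i \<in> {1..k} \<Longrightarrow> xi i \<in> \<real>"
    and conj_pair_nodes: "\<And>j. j \<in> {1..m} \<Longrightarrow> xi (k + 2*j - 1) = cnj (xi (k + 2*j))"
begin

abbreviation u :: "nat \<Rightarrow> complex poly" where
  "u \<equiv> lagrange_basis n xi"

lemma pair_indices_in_range:
  assumes "j \<in> {1..m}"
  shows "k + 2*j - 1 \<in> {1..n}" "k + 2*j \<in> {1..n}"
  using assms n_eq by auto

lemma node_index_cases:
  assumes "i \<in> {1..n}"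
  obtains "i \<in> {1..k}"
    | j where "j \<in> {1..m}" "i = k + 2*j - 1"
    | j where "j \<in> {1..m}" "i = k + 2*j"
proof (cases "i \<le> k")
  case True
  then show ?thesis using assms that(1) by simp
next
  case False
  define j where "j = (i - k + 1) div 2"
  have "j \<in> {1..m}" "i = k + 2*j - 1 \<or> i = k + 2*j"
    using False assms n_eq unfolding j_def by (simp; presburger)+
  then show ?thesis using that(2,3) by blast
qed

lemma sum_nodes_split:
  "(\<Sum>i=1..n. F i) = (\<Sum>i=1..k. F i) + (\<Sum>j=1..m. F (k + 2*j - 1) + F (k + 2*j))"
  unfolding n_eq by (rule sum_atLeastAtMost_split_pairs)

lemma cnj_node_mem:
  assumes "p \<in> {1..n}"
  shows "cnj (xi p) \<in> xi ` {1..n}"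
  using assms
proof (cases rule: node_index_cases)
  case 1
  then show ?thesis using assms real_nodes by (simp add: Reals_cnj_iff)
next
  case (2 j)
  then show ?thesis using conj_pair_nodes pair_indices_in_range by auto
next
  case (3 j)
  then show ?thesis using conj_pair_nodes pair_indices_in_range by (metis imageI)
qed

lemma lagrange_basis_real_node:
  assumes "i \<in> {1..k}"
  shows "u i = map_poly complex_of_real (Re_poly (u i))"
proof -
  have "i \<in> {1..n}" using assms n_eq by auto
  moreover have "cnj (xi i) = xi i" using assms real_nodes by (simp add: Reals_cnj_iff)
  ultimately show ?thesis
    by (intro real_poly_if_map_poly_cnj_eq map_poly_cnj_lagrange_basis[OF inj_xi cnj_node_mem])
qed

lemma lagrange_basis_conj_pair:
  assumes "j \<in> {1..m}"
  shows "u (k + 2*j - 1) = map_poly cnj (u (k + 2*j))"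
  by (rule sym, rule map_poly_cnj_lagrange_basis[OF inj_xi cnj_node_mem])
    (use assms pair_indices_in_range conj_pair_nodes in auto)

end

text \<open>Here \<open>\<gamma> i\<close> stands for \<open>g(\<xi>\<^sub>i)\<close>: apart from the divisibility by \<open>f\<close>, the theorem only
  depends on these values.\<close>

locale lagrange_sos = conj_node_labeling +
  fixes \<gamma> :: "nat \<Rightarrow> complex" and lam w :: "nat \<Rightarrow> real" and hh :: "nat \<Rightarrow> real poly"
  assumes real_value: "\<And>i. i \<in> {1..k} \<Longrightarrow> \<gamma> i = complex_of_real (w i)"
    and real_weight_pos: "\<And>i. i \<in> {1..k} \<Longrightarrow> w i > 0"
    and conj_pair_values: "\<And>j. j \<in> {1..m} \<Longrightarrow> \<gamma> (k + 2*j - 1) = cnj (\<gamma> (k + 2*j))"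
    and lam_gt: "\<And>j. j \<in> {1..m} \<Longrightarrow> cmod (\<gamma> (k + 2*j)) < lam j"
    and hh_real: "\<And>i. i \<in> {1..k} \<Longrightarrow> hh i = Re_poly (lagrange_basis n xi i)"
    and hh_pair_fst: "\<And>j. j \<in> {1..m} \<Longrightarrow> hh (k + 2*j - 1) = Re_poly (lagrange_basis n xi (k + 2*j))
        - smult (pair_shear (lam j) (\<gamma> (k + 2*j))) (Im_poly (lagrange_basis n xi (k + 2*j)))"
    and hh_pair_snd: "\<And>j. j \<in> {1..m} \<Longrightarrow>
      hh (k + 2*j) = smult (pair_scale (lam j) (\<gamma> (k + 2*j))) (Im_poly (lagrange_basis n xi (k + 2*j)))"
    and w_pair_fst: "\<And>j. j \<in> {1..m} \<Longrightarrow> w (k + 2*j - 1) = pair_weight (lam j) (\<gamma> (k + 2*j))"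
    and w_pair_snd: "\<And>j. j \<in> {1..m} \<Longrightarrow> w (k + 2*j) = pair_weight (lam j) (\<gamma> (k + 2*j))"
begin

definition sos_poly :: "complex poly" where
  "sos_poly = (\<Sum>i=1..n. smult (\<gamma> i) ((u i)\<^sup>2))
     + smult 2 (\<Sum>j=1..m. smult (complex_of_real (lam j)) (u (k + 2*j - 1) * u (k + 2*j)))"

lemma weight_pos:
  assumes "i \<in> {1..n}"
  shows "w i > 0"
  using assms
proof (cases rule: node_index_cases)
  case 1
  then show ?thesis using real_weight_pos by blast
next
  case (2 j)
  then show ?thesis using w_pair_fst[OF 2(1)] pair_weight_pos[OF lam_gt[OF 2(1)]] by simp
next
  case (3 j)
  then show ?thesis using w_pair_snd[OF 3(1)] pair_weight_pos[OF lam_gt[OF 3(1)]] by simp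
qed

lemma degree_hh_less:
  assumes "i \<in> {1..n}"
  shows "degree (hh i) < n"
  using assms
proof (cases rule: node_index_cases)
  case 1
  have "degree (Re_poly (u i)) < n"
    using degree_Re_poly_le degree_lagrange_basis_less[OF assms] by (rule le_less_trans)
  then show ?thesis using 1 hh_real by simp
next
  case (2 j)
  have "degree (u (k + 2*j)) < n"
    using pair_indices_in_range(2)[OF 2(1)] by (rule degree_lagrange_basis_less)
  then have "degree (Re_poly (u (k + 2*j))) < n" "degree (smult c (Im_poly (u (k + 2*j)))) < n" for c
    by (rule le_less_trans[OF degree_Re_poly_le],
        rule le_less_trans[OF degree_smult_le le_less_trans[OF degree_Im_poly_le]])
  then show ?thesis
    unfolding 2(2) hh_pair_fst[OF 2(1)]
    by (intro le_less_trans[OF degree_diff_le_max]) simp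
next
  case (3 j)
  have "degree (u (k + 2*j)) < n"
    using pair_indices_in_range(2)[OF 3(1)] by (rule degree_lagrange_basis_less)
  then show ?thesis
    unfolding 3(2) hh_pair_snd[OF 3(1)]
    by (rule le_less_trans[OF degree_smult_le le_less_trans[OF degree_Im_poly_le]])
qed

lemma poly_sos_poly_node:
  assumes p: "p \<in> {1..n}"
  shows "poly sos_poly (xi p) = \<gamma> p"
proof -
  have "poly (\<Sum>j=1..m. smult (complex_of_real (lam j)) (u (k + 2*j - 1) * u (k + 2*j))) (xi p) = 0"
    unfolding poly_sum
    by (rule sum.neutral) (use p pair_indices_in_range in \<open>auto simp: poly_lagrange_basis[OF inj_xi]\<close>)
  moreover have "poly (\<Sum>i=1..n. smult (\<gamma> i) ((u i)\<^sup>2)) (xi p) = (\<Sum>i=1..n. if i = p then \<gamma> i else 0)"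
    unfolding poly_sum by (rule sum.cong) (use p in \<open>simp_all add: poly_lagrange_basis[OF inj_xi]\<close>)
  ultimately show ?thesis
    using p by (simp add: sos_poly_def poly_sum)
qed


lemma sos_poly_eq_sum_of_squares:
  "sos_poly = map_poly complex_of_real (\<Sum>i=1..n. smult (w i) ((hh i)\<^sup>2))"
proof -
  have real_term: "smult (\<gamma> i) ((u i)\<^sup>2) = map_poly complex_of_real (smult (w i) ((hh i)\<^sup>2))"
    if "i \<in> {1..k}" for i
    using that real_value[OF that] hh_real[OF that] lagrange_basis_real_node[OF that]
    by (simp add: map_poly_of_real_simps)
  have pair_term:
    "smult (\<gamma> (k + 2*j - 1)) ((u (k + 2*j - 1))\<^sup>2) + smult (\<gamma> (k + 2*j)) ((u (k + 2*j))\<^sup>2)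
       + smult 2 (smult (complex_of_real (lam j)) (u (k + 2*j - 1) * u (k + 2*j)))
     = map_poly complex_of_real
         (smult (w (k + 2*j - 1)) ((hh (k + 2*j - 1))\<^sup>2) + smult (w (k + 2*j)) ((hh (k + 2*j))\<^sup>2))"
    if "j \<in> {1..m}" for j
    using conj_pair_sum_of_squares[OF lam_gt[OF that], of "u (k + 2*j)"]
    unfolding lagrange_basis_conj_pair[OF that] conj_pair_values[OF that] hh_pair_fst[OF that] hh_pair_snd[OF that]
      w_pair_fst[OF that] w_pair_snd[OF that]
    by simp
  have "sos_poly = (\<Sum>i=1..k. smult (\<gamma> i) ((u i)\<^sup>2))
      + (\<Sum>j=1..m. smult (\<gamma> (k + 2*j - 1)) ((u (k + 2*j - 1))\<^sup>2) + smult (\<gamma> (k + 2*j)) ((u (k + 2*j))\<^sup>2)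
           + smult 2 (smult (complex_of_real (lam j)) (u (k + 2*j - 1) * u (k + 2*j))))"
    unfolding sos_poly_def sum_nodes_split[of "\<lambda>i. smult (\<gamma> i) ((u i)\<^sup>2)"] smult_sum_right sum.distrib
    by (simp add: add.assoc)
  also have "\<dots> = (\<Sum>i=1..k. map_poly complex_of_real (smult (w i) ((hh i)\<^sup>2)))
      + (\<Sum>j=1..m. map_poly complex_of_real
           (smult (w (k + 2*j - 1)) ((hh (k + 2*j - 1))\<^sup>2) + smult (w (k + 2*j)) ((hh (k + 2*j))\<^sup>2)))"
    by (rule arg_cong2[where f = "(+)"]; rule sum.cong[OF refl]; erule real_term pair_term)
  also have "\<dots> = map_poly complex_of_real (\<Sum>i=1..n. smult (w i) ((hh i)\<^sup>2))"
    unfolding sum_nodes_split[of "\<lambda>i. smult (w i) ((hh i)\<^sup>2)"] map_poly_of_real_add map_poly_of_real_sum ..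
  finally show ?thesis .
qed


definition pair_coeff :: "(nat \<Rightarrow> real) \<Rightarrow> nat \<Rightarrow> complex" where
  "pair_coeff c j = (complex_of_real (c (k + 2*j - 1))
     + \<i> * complex_of_real (c (k + 2*j - 1) * pair_shear (lam j) (\<gamma> (k + 2*j))
                           - c (k + 2*j) * pair_scale (lam j) (\<gamma> (k + 2*j)))) / 2"

definition lagrange_coeff :: "(nat \<Rightarrow> real) \<Rightarrow> nat \<Rightarrow> complex" where
  "lagrange_coeff c i =
     (if i \<le> k then complex_of_real (c i)
      else if even (i - k) then pair_coeff c ((i - k) div 2)
      else cnj (pair_coeff c ((i - k + 1) div 2)))"

lemma lagrange_coeff_pair:
  assumes "j \<in> {1..m}"
  shows "lagrange_coeff c (k + 2*j - 1) = cnj (pair_coeff c j)"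
    and "lagrange_coeff c (k + 2*j) = pair_coeff c j"
proof -
  have "\<not> k + 2*j - 1 \<le> k" "odd (k + 2*j - 1 - k)" "(k + 2*j - 1 - k + 1) div 2 = j"
    using assms by (auto; presburger)+
  then show "lagrange_coeff c (k + 2*j - 1) = cnj (pair_coeff c j)"
    by (simp add: lagrange_coeff_def)
  show "lagrange_coeff c (k + 2*j) = pair_coeff c j"
    using assms by (simp add: lagrange_coeff_def)
qed

lemma of_real_hh_combination:
  "map_poly complex_of_real (\<Sum>i=1..n. smult (c i) (hh i)) = (\<Sum>i=1..n. smult (lagrange_coeff c i) (u i))"
proof -
  have real_term: "map_poly complex_of_real (smult (c i) (hh i)) = smult (lagrange_coeff c i) (u i)"
    if "i \<in> {1..k}" for i
    using that hh_real[OF that] lagrange_basis_real_node[OF that]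
    by (simp add: lagrange_coeff_def map_poly_of_real_smult)
  have pair_term:
    "map_poly complex_of_real (smult (c (k + 2*j - 1)) (hh (k + 2*j - 1)))
       + map_poly complex_of_real (smult (c (k + 2*j)) (hh (k + 2*j)))
     = smult (lagrange_coeff c (k + 2*j - 1)) (u (k + 2*j - 1))
       + smult (lagrange_coeff c (k + 2*j)) (u (k + 2*j))"
    if "j \<in> {1..m}" for j
    using conj_pair_linear_combination[where u = "u (k + 2*j)" and c = "c (k + 2*j - 1)" and c' = "c (k + 2*j)"]
    unfolding lagrange_basis_conj_pair[OF that] lagrange_coeff_pair[OF that]
      hh_pair_fst[OF that] hh_pair_snd[OF that] pair_coeff_def map_poly_of_real_add .
  have "map_poly complex_of_real (\<Sum>i=1..n. smult (c i) (hh i))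
      = (\<Sum>i=1..n. map_poly complex_of_real (smult (c i) (hh i)))"
    by (rule map_poly_of_real_sum)
  also have "\<dots> = (\<Sum>i=1..n. smult (lagrange_coeff c i) (u i))"
    unfolding sum_nodes_split[of "\<lambda>i. map_poly complex_of_real (smult (c i) (hh i))"]
      sum_nodes_split[of "\<lambda>i. smult (lagrange_coeff c i) (u i)"]
    by (rule arg_cong2[where f = "(+)"]; rule sum.cong[OF refl]; erule real_term pair_term)
  finally show ?thesis .
qed

lemma coeff_eq_0_if_lagrange_coeff_eq_0:
  assumes zero: "\<And>p. p \<in> {1..n} \<Longrightarrow> lagrange_coeff c p = 0" and i: "i \<in> {1..n}"
  shows "c i = 0"
  using i
proof (cases rule: node_index_cases)
  case 1
  then show ?thesis using zero[OF i] by (simp add: lagrange_coeff_def)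
next
  case (2 j)
  have "pair_coeff c j = 0"
    using zero[OF pair_indices_in_range(2)[OF 2(1)]] lagrange_coeff_pair(2)[OF 2(1)] by simp
  then show ?thesis using 2 by (simp add: pair_coeff_def complex_eq_iff)
next
  case (3 j)
  have "pair_coeff c j = 0"
    using zero[OF pair_indices_in_range(2)[OF 3(1)]] lagrange_coeff_pair(2)[OF 3(1)] by simp
  then have "Re (pair_coeff c j) = 0" "Im (pair_coeff c j) = 0"
    by simp_all
  then have "c (k + 2*j - 1) = 0"
    "c (k + 2*j - 1) * pair_shear (lam j) (\<gamma> (k + 2*j)) - c (k + 2*j) * pair_scale (lam j) (\<gamma> (k + 2*j)) = 0"
    by (simp_all add: pair_coeff_def)
  then show ?thesis using 3 pair_scale_pos[OF lam_gt[OF 3(1)]] by simp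
qed

lemma hh_linear_independent:
  assumes "(\<Sum>i=1..n. smult (c i) (hh i)) = 0" and "i \<in> {1..n}"
  shows "c i = 0"
proof (rule coeff_eq_0_if_lagrange_coeff_eq_0[OF _ assms(2)])
  fix p assume p: "p \<in> {1..n}"
  have "lagrange_coeff c p = poly (map_poly complex_of_real (\<Sum>i=1..n. smult (c i) (hh i))) (xi p)"
    unfolding of_real_hh_combination by (rule poly_lagrange_combination[OF inj_xi p, symmetric])
  then show "lagrange_coeff c p = 0"
    using assms(1) by simp
qed

end

lemma real_poly_dvd_diff_if_agree_on_roots:
  fixes f p q :: "real poly" and xi :: "nat \<Rightarrow> complex"
  assumes "f \<noteq> 0"
    and roots: "map_poly complex_of_real f = smult (complex_of_real (lead_coeff f)) (\<Prod>i=1..n. [:- xi i, 1:])"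
    and inj: "inj_on xi {1..n}"
    and agree: "\<And>j. j \<in> {1..n} \<Longrightarrow> poly (map_poly complex_of_real p) (xi j) = poly (map_poly complex_of_real q) (xi j)"
  shows "f dvd p - q"
proof (rule of_real_poly_dvd_imp_dvd)
  have "(\<Prod>i=1..n. [:- xi i, 1:]) dvd map_poly complex_of_real (p - q)"
    using agree by (intro prod_linear_factors_dvd[OF _ inj]) (simp_all add: map_poly_of_real_diff)
  then show "map_poly complex_of_real f dvd map_poly complex_of_real (p - q)"
    using \<open>f \<noteq> 0\<close> by (simp add: roots smult_dvd_iff)
qed

theorem mainTheorem2:
  fixes f g :: "real poly" and n k :: nat and xi :: "nat \<Rightarrow> complex"
    and lam :: "nat \<Rightarrow> real" and h :: "complex poly"
    and hh :: "nat \<Rightarrow> real poly" and w :: "nat \<Rightarrow> real"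
  assumes sqf: "squarefree f"
    and deg: "degree f = n"
    and fact: "map_poly complex_of_real f
               = smult (complex_of_real (lead_coeff f)) (\<Prod>i=1..n. [:- xi i, 1:])"
    and dist: "inj_on xi {1..n}"
    and kn: "k \<le> n" and ev: "even (n - k)"
    and real_roots: "\<forall>i\<in>{1..k}. xi i \<in> \<real>"
    and nonreal_roots: "\<forall>i\<in>{k+1..n}. xi i \<notin> \<real>"
    and pairs: "\<forall>i\<in>{1..(n-k) div 2}. xi (k+2*i-1) = cnj (xi (k+2*i))"
    and gpos: "\<forall>i\<in>{1..k}. poly g (Re (xi i)) > 0"
    and lam: "\<forall>i\<in>{1..(n-k) div 2}.
               lam i > cmod (poly (map_poly complex_of_real g) (xi (k+2*i)))"
    and h_def: "h = (\<Sum>i=1..n. smult (poly (map_poly complex_of_real g) (xi i))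
                                      ((lagrange_basis n xi i)\<^sup>2))
                  + smult 2 (\<Sum>i=1..(n-k) div 2. smult (complex_of_real (lam i))
                              (lagrange_basis n xi (k+2*i-1) * lagrange_basis n xi (k+2*i)))"
    and hh_real: "\<forall>i\<in>{1..k}. hh i = Re_poly (lagrange_basis n xi i)
                               \<and> w i = poly g (Re (xi i))"
    and hh_pair: "\<forall>i\<in>{1..(n-k) div 2}.
       (let \<gamma> = poly (map_poly complex_of_real g) (xi (k+2*i));
            u = lagrange_basis n xi (k+2*i) in
          hh (k+2*i-1) = Re_poly u - smult (Im \<gamma> / (lam i + Re \<gamma>)) (Im_poly u)
        \<and> hh (k+2*i) = smult (sqrt ((lam i)\<^sup>2 - (cmod \<gamma>)\<^sup>2) / (lam i + Re \<gamma>)) (Im_poly u)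
        \<and> w (k+2*i-1) = 2 * (lam i + Re \<gamma>)
        \<and> w (k+2*i) = 2 * (lam i + Re \<gamma>))"
  shows "h = map_poly complex_of_real (Re_poly h)
       \<and> f dvd (Re_poly h - g)
       \<and> Re_poly h = (\<Sum>i=1..n. smult (w i) ((hh i)\<^sup>2))
       \<and> (\<forall>i\<in>{1..n}. w i > 0)
       \<and> (\<forall>c :: nat \<Rightarrow> real. (\<Sum>i=1..n. smult (c i) (hh i)) = 0 \<longrightarrow> (\<forall>i\<in>{1..n}. c i = 0))
       \<and> (\<forall>i\<in>{1..n}. degree (hh i) < n)"
proof -
  define m where "m = (n - k) div 2"
  define \<gamma> where "\<gamma> i = poly (map_poly complex_of_real g) (xi i)" for i
  have real_value: "\<gamma> i = complex_of_real (w i)" if "i \<in> {1..k}" for i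
  proof -
    have "xi i = complex_of_real (Re (xi i))"
      using real_roots that by (simp add: complex_is_Real_iff complex_eq_iff)
    then show ?thesis
      using hh_real that by (metis \<gamma>_def poly_of_real_poly_of_real)
  qed
  interpret lagrange_sos n k m xi \<gamma> lam w hh
  proof unfold_locales
    show "n = k + 2 * m"
      using kn ev unfolding m_def by (metis add_diff_inverse_nat dvd_mult_div_cancel not_le)
  qed (use dist real_roots pairs real_value gpos lam hh_real hh_pair in
        \<open>auto simp: m_def \<gamma>_def Let_def pair_weight_def pair_shear_def pair_scale_def poly_of_real_poly_cnj\<close>)
  have h_eq: "h = sos_poly"
    unfolding h_def sos_poly_def by (simp add: m_def \<gamma>_def)
  have "f dvd Re_poly h - g"
    using sqf dist fact poly_sos_poly_node
    by (intro real_poly_dvd_diff_if_agree_on_roots) (auto simp: h_eq sos_poly_eq_sum_of_squares \<gamma>_def)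
  then show ?thesis
    using sos_poly_eq_sum_of_squares weight_pos hh_linear_independent degree_hh_less
    by (simp add: h_eq)
qed

end
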